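(* Consider the following two-bidder auction. A single good has common value $v$ with CDF $F_v$, density $f_v$, support $\mathbb{R}_+$ and finite mean, and $\mathbb{E}[v]>L\ge 0$. Alice submits a bid knowing only $F_v$; then $v$ is realized and Bob, observing $v$ but not Alice's bid, submits a bid. The highest bid wins and pays its bid (payoff $v$ minus bid) unless it is strictly below the limit price $L$, in which case the good is unsold. If the bids tie, Bob wins; if Bob's bid equals $L$ he can win; a winning bid of Alice equal exactly to $L$ results in no sale. Then in any (perfect Bayesian Nash) equilibrium, Alice obtains expected payoff $0$ from every bid she submits (i.e., from every bid in the support of her strategy).
   Context: Bidders are risk neutral. *)

theory Defs
  imports "HOL-Probability.Probability"
begin

definition value_dist :: "(real \<Rightarrow> real) \<Rightarrow> real measure" where
  "value_dist f = density lborel (\<lambda>x. ennreal (f x))"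

text \<open>Alice's expected payoff from bid a, when Bob uses the (behavioural) strategy
  B (B v is the distribution of Bob's bid given value v).  Alice wins iff Bob's bid
  is strictly below hers (ties go to Bob), and a sale happens only if a > L.\<close>
definition alice_payoff ::
  "(real \<Rightarrow> real) \<Rightarrow> (real \<Rightarrow> real measure) \<Rightarrow> real \<Rightarrow> real \<Rightarrow> real" where
  "alice_payoff f B L a =
     (if L < a then (\<integral>v. (v - a) * measure (B v) {..<a} \<partial>value_dist f) else 0)"

text \<open>Bob's expected payoff from bid b at value v, when Alice's bid has distribution A.
  Bob wins iff Alice's bid is at most his (ties to Bob) and b \<ge> L.\<close>
definition bob_payoff :: "real measure \<Rightarrow> real \<Rightarrow> real \<Rightarrow> real \<Rightarrow> real" where
  "bob_payoff A L v b = (if L \<le> b then (v - b) * measure A {..b} else 0)"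

text \<open>(Perfect Bayesian Nash) equilibrium in mixed strategies: almost every bid in the
  support of each player's strategy is a best response; Bob best responds at every
  value in the support R_+.\<close>
definition equilibrium ::
  "(real \<Rightarrow> real) \<Rightarrow> real \<Rightarrow> real measure \<Rightarrow> (real \<Rightarrow> real measure) \<Rightarrow> bool" where
  "equilibrium f L A B \<longleftrightarrow>
     (AE a in A. \<forall>a'. alice_payoff f B L a' \<le> alice_payoff f B L a) \<and>
     (\<forall>v\<ge>0. AE b in B v. \<forall>b'. bob_payoff A L v b' \<le> bob_payoff A L v b)"

end

theory Submission
  imports Defs
begin

text \<open>In equilibrium all bids in the support of Alice's strategy earn her the same payoff
  \<open>M\<close>, which is her best payoff, so \<open>M \<ge> 0\<close> because bidding \<open>L\<close> earns \<open>0\<close>.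
  Suppose \<open>M > 0\<close>. Then Alice bids above \<open>L\<close> almost surely; let \<open>a \<ge> L\<close> be the lowest point of
  the support of her bid. Bob, at any value \<open>v > a\<close>, profits by bidding in \<open>(a, v)\<close>, so he only
  bids where Alice's bid distribution function is positive. If \<open>a\<close> is an atom, \<open>a\<close> itself is a
  best response of Alice, and it wins only against Bobs with \<open>v \<le> a\<close> (Bob never bids below
  \<open>a\<close>), which is worthless. Otherwise Bob never bids at or below \<open>a\<close>, and along best responses
  of Alice decreasing to \<open>a\<close> her payoff tends to at most \<open>0\<close> by dominated convergence.
  Either way \<open>M \<le> 0\<close>.\<close>

lemma AE_exists_in_non_null:
  assumes "AE x in M. P x" and "X \<in> sets M" and "emeasure M X \<noteq> 0"
  shows "\<exists>x\<in>X. P x"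
proof (rule ccontr)
  assume "\<not> (\<exists>x\<in>X. P x)"
  with assms(1) have "AE x in M. x \<notin> X" by (auto elim: eventually_mono)
  with assms(2,3) show False by (auto simp: AE_iff_null_sets[symmetric])
qed

lemma measure_zero_if_AE_notin:
  assumes "AE x in M. x \<notin> X" and "X \<in> sets M"
  shows "measure M X = 0"
  using assms by (simp add: AE_iff_null_sets[symmetric] measure_eq_0_null_sets)

lemma (in real_distribution) ex_lowest_support_point:
  assumes "measure M {..l} = 0"
  obtains a where "l \<le> a" and "measure M {..<a} = 0" and "\<forall>c>a. 0 < measure M {..c}"
proof -
  define T where "T = {c. 0 < cdf M c}"
  have "\<forall>\<^sub>F c in at_top. 0 < cdf M c"
    using cdf_lim_at_top_prob by (rule order_tendstoD) simp
  then obtain t where "t \<in> T" unfolding T_def by (auto simp: eventually_at_top_linorder)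
  have T_gt: "l < t" if "t \<in> T" for t
  proof (rule ccontr)
    assume "\<not> l < t"
    then have "cdf M t \<le> cdf M l" by (simp add: cdf_nondecreasing)
    with that assms show False by (simp add: T_def cdf_def2)
  qed
  then have "bdd_below T" by (meson bdd_belowI less_imp_le)
  show thesis
  proof
    show "l \<le> Inf T"
      by (rule cInf_greatest) (use \<open>t \<in> T\<close> T_gt less_imp_le in auto)
    have "cdf M c = 0" if "c < Inf T" for c
      using cInf_lower[OF _ \<open>bdd_below T\<close>, of c] that cdf_nonneg[of c]
      by (force simp: T_def)
    then have "\<forall>\<^sub>F c in at_left (Inf T). cdf M c = 0"
      by (auto simp: eventually_at_left_field intro: exI[of _ "Inf T - 1"])
    then have "(cdf M \<longlongrightarrow> 0) (at_left (Inf T))"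
      by (rule tendsto_eventually)
    then show "measure M {..<Inf T} = 0"
      using tendsto_unique[OF _ cdf_at_left] by simp
    show "\<forall>c>Inf T. 0 < measure M {..c}"
    proof (intro allI impI)
      fix c assume "Inf T < c"
      then obtain t where "t \<in> T" "t < c" using cInf_lessD \<open>t \<in> T\<close> by blast
      then show "0 < measure M {..c}"
        using cdf_nondecreasing[of t c] by (simp add: T_def cdf_def2)
    qed
  qed
qed

lemma equilibrium_AE_bob_win_prob_pos:
  assumes "equilibrium f L A B" and "0 \<le> v" and "L \<le> c" and "c < v"
    and "0 < measure A {..c}"
  shows "AE b in B v. 0 < measure A {..b}"
proof -
  have "0 < bob_payoff A L v c" using assms(3-5) by (simp add: bob_payoff_def)
  moreover have "AE b in B v. \<forall>b'. bob_payoff A L v b' \<le> bob_payoff A L v b"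
    using assms(1,2) by (simp add: equilibrium_def)
  ultimately show ?thesis
    by (elim eventually_mono) (force simp: bob_payoff_def less_le split: if_splits)
qed

lemma ex_seq_approaching_lowest_support_point:
  assumes A: "real_distribution A" and Q: "AE x in A. Q x"
    and below: "measure A {..<a} = 0" and above: "\<forall>c>a. 0 < measure A {..c}"
    and B: "\<And>v. real_distribution (B v)"
    and B_AE: "\<forall>v\<in>W. AE b in B v. 0 < measure A {..b}"
  obtains xs where "\<And>n. Q (xs n)" and "\<And>n. a \<le> xs n"
    and "\<forall>v\<in>W. (\<lambda>n. measure (B v) {..<xs n}) \<longlonglongrightarrow> 0"
proof -
  interpret A: real_distribution A by (rule A)
  have B_null: "measure (B v) X = 0"
    if "v \<in> W" "X \<in> sets borel" "\<And>b. b \<in> X \<Longrightarrow> measure A {..b} = 0" for v X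
  proof (rule measure_zero_if_AE_notin)
    show "AE b in B v. b \<notin> X"
      using B_AE \<open>v \<in> W\<close> that(3) by (fastforce elim: eventually_mono)
    show "X \<in> sets (B v)" using that(2) B real_distribution.events_eq_borel by blast
  qed
  have "AE x in A. x \<notin> {..<a}"
    using below by (intro AE_not_in) (auto simp: A.emeasure_eq_measure)
  with Q have AE_ge: "AE x in A. Q x \<and> a \<le> x" by eventually_elim auto
  show thesis
  proof (cases "measure A {..a} = 0")
    case False
    then obtain x where "x \<le> a" "Q x" "a \<le> x"
      using AE_exists_in_non_null[OF AE_ge, of "{..a}"] by (auto simp: A.emeasure_eq_measure)
    moreover have "measure (B v) {..<a} = 0" if "v \<in> W" for v
    proof (rule B_null[OF that])
      fix b assume "b \<in> {..<a}"
      then have "measure A {..b} \<le> measure A {..<a}" by (intro A.finite_measure_mono) auto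
      with below show "measure A {..b} = 0" by (simp add: measure_le_0_iff)
    qed simp
    ultimately show thesis by (intro that[of "\<lambda>_. a"]) auto
  next
    case True
    define r where "r n = a + inverse (real (Suc n))" for n
    have "\<exists>x. Q x \<and> a \<le> x \<and> x \<le> r n" for n
    proof -
      have "0 < measure A {..r n}" using above by (simp add: r_def)
      then show ?thesis
        using AE_exists_in_non_null[OF AE_ge, of "{..r n}"] by (auto simp: A.emeasure_eq_measure)
    qed
    then obtain xs where xs: "\<And>n. Q (xs n)" "\<And>n. a \<le> xs n" "\<And>n. xs n \<le> r n"
      by metis
    have r_right: "filterlim r (at_right a) sequentially"
      unfolding r_def filterlim_at using LIMSEQ_inverse_real_of_nat_add by auto
    have B_lim: "(\<lambda>n. measure (B v) {..<xs n}) \<longlonglongrightarrow> 0" if "v \<in> W" for v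
    proof -
      interpret Bv: real_distribution "B v" by (rule B)
      have "(\<lambda>n. cdf (B v) (r n)) \<longlonglongrightarrow> cdf (B v) a"
        using Bv.cdf_is_right_cont[of a] r_right
        unfolding continuous_within by (rule filterlim_compose)
      moreover have "cdf (B v) a = 0"
      proof (unfold cdf_def, rule B_null[OF that])
        fix b assume "b \<in> {..a}"
        then have "measure A {..b} \<le> measure A {..a}" by (intro A.finite_measure_mono) auto
        with True show "measure A {..b} = 0" by (simp add: measure_le_0_iff)
      qed simp
      ultimately have lim0: "(\<lambda>n. cdf (B v) (r n)) \<longlonglongrightarrow> 0" by simp
      have le: "measure (B v) {..<xs n} \<le> cdf (B v) (r n)" for n
        unfolding cdf_def using xs(3)[of n] by (intro Bv.finite_measure_mono) auto
      show ?thesis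
        by (rule tendsto_sandwich[OF _ _ tendsto_const lim0]) (simp_all add: le)
    qed
    show thesis using that xs(1,2) B_lim by blast
  qed
qed

lemma sets_value_dist [measurable_cong]: "sets (value_dist f) = sets borel"
  by (simp add: value_dist_def)

lemma alice_payoff_le_null_sequence:
  fixes f :: "real \<Rightarrow> real" and B :: "real \<Rightarrow> real measure"
  assumes V: "finite_measure (value_dist f)" and mean: "integrable (value_dist f) (\<lambda>v. v)"
    and B: "\<And>v. prob_space (B v)"
    and B_meas: "\<And>x. (\<lambda>v. measure (B v) {..<x}) \<in> borel_measurable borel"
    and ge: "\<And>n. a \<le> xs n"
    and lim: "\<forall>v\<in>{a<..}. (\<lambda>n. measure (B v) {..<xs n}) \<longlonglongrightarrow> 0"
  obtains u where "u \<longlonglongrightarrow> 0" and "\<And>n. alice_payoff f B L (xs n) \<le> u n"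
proof -
  let ?V = "value_dist f"
  interpret V: finite_measure ?V by (fact V)
  have B_le_1: "measure (B v) X \<le> 1" for v X
    using B prob_space.prob_le_1 by blast
  have B_meas_V: "(\<lambda>v. measure (B v) {..<x}) \<in> borel_measurable ?V" for x
    using B_meas by (simp add: measurable_cong_sets[OF sets_value_dist refl])
  have dist_int: "integrable ?V (\<lambda>v. \<bar>v - x\<bar>)" for x
    using mean by (intro integrable_abs Bochner_Integration.integrable_diff) auto
  define h where "h n v = indicator {a<..} v * (v - a) * measure (B v) {..<xs n}" for n v
  have h_meas: "h n \<in> borel_measurable ?V" for n
    unfolding h_def using B_meas_V by measurable
  have h_bound: "norm (h n v) \<le> \<bar>v - a\<bar>" for n v
    using B_le_1[of v] by (auto simp: h_def indicator_def abs_mult intro: mult_left_le)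
  have h_lim: "(\<lambda>n. h n v) \<longlonglongrightarrow> 0" for v
  proof (cases "a < v")
    case True
    then show ?thesis
      using tendsto_mult_right_zero[of _ sequentially "v - a"] lim by (simp add: h_def)
  qed (simp add: h_def)
  have "(\<lambda>n. integral\<^sup>L ?V (h n)) \<longlonglongrightarrow> integral\<^sup>L ?V (\<lambda>_. 0)"
    by (rule integral_dominated_convergence[OF _ h_meas dist_int[of a]])
      (use h_lim h_bound in auto)
  moreover have "alice_payoff f B L (xs n) \<le> integral\<^sup>L ?V (h n)" for n
  proof -
    have h_int: "integrable ?V (h n)"
      by (rule Bochner_Integration.integrable_bound[OF dist_int[of a] h_meas]) (use h_bound in auto)
    have h_nonneg: "0 \<le> h n v" for v
      by (simp add: h_def indicator_def)
    define g where "g v = (v - xs n) * measure (B v) {..<xs n}" for v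
    have g_le_h: "g v \<le> h n v" for v
    proof (cases "a < v")
      case True
      then show ?thesis
        using ge[of n] by (simp add: g_def h_def mult_right_mono)
    next
      case False
      then show ?thesis
        using ge[of n] by (simp add: g_def h_def mult_nonpos_nonneg)
    qed
    have "integrable ?V g"
    proof (rule Bochner_Integration.integrable_bound[OF dist_int[of "xs n"]])
      show "g \<in> borel_measurable ?V" unfolding g_def using B_meas_V by measurable
      show "AE v in ?V. norm (g v) \<le> norm \<bar>v - xs n\<bar>"
        using B_le_1 by (intro AE_I2) (simp add: g_def abs_mult mult_left_le)
    qed
    then have "integral\<^sup>L ?V g \<le> integral\<^sup>L ?V (h n)"
      using h_int g_le_h by (rule integral_mono)
    moreover have "0 \<le> integral\<^sup>L ?V (h n)"
      using h_nonneg by (rule Bochner_Integration.integral_nonneg)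
    ultimately show ?thesis
      by (simp add: alice_payoff_def g_def[abs_def])
  qed
  ultimately show thesis by (intro that) simp_all
qed

lemma equilibrium_alice_payoff_AE_eq_max:
  assumes "equilibrium f L A B" and "prob_space A"
  obtains M where "AE a in A. alice_payoff f B L a = M" and "\<And>a. alice_payoff f B L a \<le> M"
proof -
  have best: "AE a in A. \<forall>a'. alice_payoff f B L a' \<le> alice_payoff f B L a"
    using assms(1) by (simp add: equilibrium_def)
  then obtain a0 where a0: "\<And>a'. alice_payoff f B L a' \<le> alice_payoff f B L a0"
    using AE_exists_in_non_null[OF best, of "space A"]
      prob_space.emeasure_space_1[OF assms(2)]
    by auto
  from best have "AE a in A. alice_payoff f B L a = alice_payoff f B L a0"
    by (rule eventually_mono) (use a0 in \<open>blast intro: order_antisym\<close>)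
  then show thesis using a0 by (rule that)
qed

theorem lemma2:
  fixes f :: "real \<Rightarrow> real" and L :: real
    and A :: "real measure" and B :: "real \<Rightarrow> real measure"
  assumes f_meas: "f \<in> borel_measurable borel"
    and f_nonneg: "\<forall>x. 0 \<le> f x"
    and V_prob: "prob_space (value_dist f)"
    and supp_neg: "emeasure (value_dist f) {..<0} = 0"
    and supp_pos: "\<forall>a b. 0 \<le> a \<longrightarrow> a < b \<longrightarrow> 0 < measure (value_dist f) {a<..<b}"
    and mean_fin: "integrable (value_dist f) (\<lambda>v. v)"
    and L_nonneg: "0 \<le> L"
    and mean_gt: "(\<integral>v. v \<partial>value_dist f) > L"
    and A_prob: "prob_space A" and A_sets: "sets A = sets borel"
    and B_prob: "\<forall>v. prob_space (B v)" and B_sets: "\<forall>v. sets (B v) = sets borel"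
    and B_meas: "\<forall>a. (\<lambda>v. measure (B v) {..<a}) \<in> borel_measurable borel"
    and eq: "equilibrium f L A B"
  shows "AE a in A. alice_payoff f B L a = 0"
proof -
  have A: "real_distribution A" and B: "\<And>v. real_distribution (B v)"
    using A_prob A_sets B_prob B_sets
    by (simp_all add: real_distribution_def real_distribution_axioms_def)
  have V_fin: "finite_measure (value_dist f)" using V_prob by (simp add: prob_space_def)
  obtain M where AE_M: "AE a in A. alice_payoff f B L a = M"
    and max: "\<And>a. alice_payoff f B L a \<le> M"
    by (rule equilibrium_alice_payoff_AE_eq_max[OF eq A_prob]) blast
  have "M \<le> 0"
  proof (rule ccontr)
    assume "\<not> M \<le> 0"
    with AE_M have "AE a in A. a \<notin> {..L}" by (auto simp: alice_payoff_def elim: eventually_mono)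
    then have "measure A {..L} = 0" using A_sets by (intro measure_zero_if_AE_notin) auto
    then obtain a where "L \<le> a" and a: "measure A {..<a} = 0" "\<forall>c>a. 0 < measure A {..c}"
      by (rule real_distribution.ex_lowest_support_point[OF A]) blast
    have bob_AE: "\<forall>v\<in>{a<..}. AE b in B v. 0 < measure A {..b}"
    proof
      fix v assume "v \<in> {a<..}"
      then show "AE b in B v. 0 < measure A {..b}"
        by (intro equilibrium_AE_bob_win_prob_pos[OF eq, of v "(a + v) / 2"])
          (use \<open>L \<le> a\<close> L_nonneg a(2) in auto)
    qed
    obtain xs where xs_M: "\<And>n. alice_payoff f B L (xs n) = M" and xs_ge: "\<And>n. a \<le> xs n"
      and xs_lim: "\<forall>v\<in>{a<..}. (\<lambda>n. measure (B v) {..<xs n}) \<longlonglongrightarrow> 0"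
      by (rule ex_seq_approaching_lowest_support_point[OF A AE_M a B bob_AE]) blast
    obtain u where "u \<longlonglongrightarrow> 0" and "\<And>n. alice_payoff f B L (xs n) \<le> u n"
      using alice_payoff_le_null_sequence[OF V_fin mean_fin B_prob[rule_format]
          B_meas[rule_format] xs_ge xs_lim]
      by blast
    with xs_M have "M \<le> 0" by (metis LIMSEQ_le_const)
    with \<open>\<not> M \<le> 0\<close> show False by simp
  qed
  moreover have "0 \<le> M" using max[of L] by (simp add: alice_payoff_def)
  ultimately show ?thesis using AE_M by simp
qed

end
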